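(* Let $(\mathfrak{X},\pi)$, $a$, $s$, $S$, $m$ be as in the context, let $z\in\mathbb{H}$ and let $F(z)$ be the operator $(F(z)w)_x=|m_x(z)|\int s_{xy}|m_y(z)|w_y\,\pi(\mathrm{d}y)$. Then $\|F(z)\|_2$ is an eigenvalue of $F(z)$ and there exists at least one corresponding non-negative eigenfunction $f(z)\in\mathcal{B}(\mathfrak{X},[0,\infty))$. Any such eigenfunction satisfies \[ \|F(z)\|_2=1-\frac{\langle f(z)|m(z)|\rangle\,\operatorname{Im}z}{\langle f(z)|m(z)|^{-1}\operatorname{Im}m(z)\rangle}. \]
   Context: Let $(\mathfrak{X},\pi)$ be a measure space where $\pi$ is a probability measure; $\mathcal{B}(\mathfrak{X},\mathbb{D})$ denotes bounded measurable $\mathbb{D}$-valued functions; $\langle w\rangle=\int w_x\,\pi(\mathrm{d}x)$. Let $a\in\mathcal{B}(\mathfrak{X},\mathbb{R})$, $s\in\mathcal{B}(\mathfrak{X}^2,[0,\infty))$ symmetric, $(Sw)_x=\int s_{xy}w_y\,\pi(\mathrm{d}y)$. $m:\mathbb{H}\to\mathcal{B}(\mathfrak{X},\mathbb{H})$ is the unique solution of $-1/m(z)=z+a+Sm(z)$, $z\in\mathbb{H}$ (upper half-plane). $\|\cdot\|_2$ is the norm of $L^2(\mathfrak{X},\pi)$ and $\|T\|_2$ the induced operator norm of an operator $T$ on $L^2(\mathfrak{X},\pi)$ (for the symmetric operator $F(z)$ this is its spectral radius). Functions in $\mathcal{B}(\mathfrak{X},\cdot)$ are multiplied and divided pointwise.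 *)

theory Defs
  imports "HOL-Probability.Probability"
begin

definition sq_integrable :: "'a measure \<Rightarrow> ('a \<Rightarrow> real) \<Rightarrow> bool" where
  "sq_integrable M w \<longleftrightarrow> w \<in> borel_measurable M \<and> integrable M (\<lambda>x. (w x)\<^sup>2)"

definition L2norm :: "'a measure \<Rightarrow> ('a \<Rightarrow> real) \<Rightarrow> real" where
  "L2norm M w = sqrt (\<integral>x. (w x)\<^sup>2 \<partial>M)"

definition opnorm2 :: "'a measure \<Rightarrow> (('a \<Rightarrow> real) \<Rightarrow> ('a \<Rightarrow> real)) \<Rightarrow> real" where
  "opnorm2 M T = Sup {L2norm M (T w) | w. sq_integrable M w \<and> L2norm M w \<le> 1}"

definition Fop :: "'a measure \<Rightarrow> ('a \<Rightarrow> 'a \<Rightarrow> real) \<Rightarrow> ('a \<Rightarrow> complex)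
                    \<Rightarrow> ('a \<Rightarrow> real) \<Rightarrow> ('a \<Rightarrow> real)" where
  "Fop M s mz w = (\<lambda>x. cmod (mz x) * (\<integral>y. s x y * cmod (mz y) * w y \<partial>M))"

definition qve_solution :: "'a measure \<Rightarrow> ('a \<Rightarrow> real) \<Rightarrow> ('a \<Rightarrow> 'a \<Rightarrow> real)
                            \<Rightarrow> complex \<Rightarrow> ('a \<Rightarrow> complex) \<Rightarrow> bool" where
  "qve_solution M a s z u \<longleftrightarrow>
     u \<in> borel_measurable M \<and> bounded (u ` space M) \<and>
     (\<forall>x\<in>space M. Im (u x) > 0 \<and>
        - 1 / u x = z + complex_of_real (a x) + (\<integral>y. complex_of_real (s x y) * u y \<partial>M))"

end

theory Submission
  imports Defs
begin

(*
  With k(x, y) = |m_x| s_xy |m_y|, F is an integral operator with a bounded, nonnegative,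
  symmetric kernel on a probability space; it is self-adjoint on L^2 and maps L^1 boundedly into
  L^oo. Let lambda = ||F||_2 > 0 and c_n = ||F^n 1||^2 / lambda^(2n). Since ||F w|| <= lambda ||w||,
  the c_n decrease, and the spectral-radius estimate ||F w||^(2^j) <= ||F^(2^j) w|| for ||w|| <= 1,
  combined with the L^1 -> L^oo bound, keeps them above (lambda / B)^2, where B bounds k. Hence
  ||F^(2n) 1 / lambda^(2n) - F^(2m) 1 / lambda^(2m)||^2 = c_(2n) + c_(2m) - 2 c_(n+m) -> 0, and one
  more application of F turns this into a uniformly Cauchy sequence of nonnegative functions. Its
  limit U is not a.e. zero and satisfies F^2 U = lambda^2 U, so F U + lambda U is a nonnegative
  eigenfunction (for lambda = 0 the constant 1 is one).

  Taking imaginary parts in the QVE gives g = |m| Im z + F g for g = Im m / |m| > 0. Pairing with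
  an eigenfunction f and using self-adjointness yields <f g> = <f |m|> Im z + lambda <f g>, which is
  the formula. Only the fact that m(z) solves the QVE is used, not its uniqueness.
*)

section \<open>Square-integrable and bounded measurable functions\<close>

lemma le_sqrt_mult_of_quadratic_nonneg:
  fixes A G X :: real
  assumes "A \<ge> 0" and "G \<ge> 0" and quadratic: "\<And>t. 0 \<le> t\<^sup>2 * A - 2 * t * X + G"
  shows "X \<le> sqrt A * sqrt G"
proof (cases "A = 0")
  case True
  show ?thesis
  proof (rule ccontr)
    assume "\<not> ?thesis"
    hence "X > 0" using True by simp
    with quadratic[of "(G + 1) / X"] True \<open>G \<ge> 0\<close> show False by simp
  qed
next
  case False
  hence A: "A > 0" using \<open>A \<ge> 0\<close> by simp
  have "0 \<le> (X / A)\<^sup>2 * A - 2 * (X / A) * X + G" by (rule quadratic)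
  also have "\<dots> = G - X\<^sup>2 / A" using A by (simp add: field_simps power2_eq_square)
  finally have "X\<^sup>2 \<le> A * G" using A by (simp add: field_simps)
  hence "X \<le> sqrt (A * G)" by (simp add: real_le_rsqrt)
  thus ?thesis by (simp add: real_sqrt_mult)
qed

lemma sq_integrable_imp_integrable_abs_mult:
  assumes "sq_integrable M f" "sq_integrable M g"
  shows "integrable M (\<lambda>x. \<bar>f x * g x\<bar>)"
proof (rule Bochner_Integration.integrable_bound)
  have [measurable]: "f \<in> borel_measurable M" "g \<in> borel_measurable M"
    using assms by (auto simp: sq_integrable_def)
  show "integrable M (\<lambda>x. (f x)\<^sup>2 + (g x)\<^sup>2)" using assms by (simp add: sq_integrable_def)
  show "(\<lambda>x. \<bar>f x * g x\<bar>) \<in> borel_measurable M" by measurable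
  show "AE x in M. norm \<bar>f x * g x\<bar> \<le> norm ((f x)\<^sup>2 + (g x)\<^sup>2)"
  proof (rule AE_I2)
    fix x
    have "2 * (\<bar>f x\<bar> * \<bar>g x\<bar>) \<le> (f x)\<^sup>2 + (g x)\<^sup>2"
      using sum_squares_bound[of "\<bar>f x\<bar>" "\<bar>g x\<bar>"] by (simp add: power2_eq_square)
    moreover have "0 \<le> \<bar>f x\<bar> * \<bar>g x\<bar>" by simp
    ultimately have "\<bar>f x\<bar> * \<bar>g x\<bar> \<le> (f x)\<^sup>2 + (g x)\<^sup>2" by linarith
    thus "norm \<bar>f x * g x\<bar> \<le> norm ((f x)\<^sup>2 + (g x)\<^sup>2)" by (simp add: abs_mult)
  qed
qed

lemma sq_integrable_imp_integrable_mult: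
  "sq_integrable M f \<Longrightarrow> sq_integrable M g \<Longrightarrow> integrable M (\<lambda>x. f x * g x)"
  using sq_integrable_imp_integrable_abs_mult[of M f g]
  by (simp add: sq_integrable_def integrable_abs_iff borel_measurable_times)

lemma abs_integral_mult_le_L2norm:
  assumes f: "sq_integrable M f" and g: "sq_integrable M g"
  shows "\<bar>\<integral>x. f x * g x \<partial>M\<bar> \<le> L2norm M f * L2norm M g"
proof -
  have fg: "integrable M (\<lambda>x. \<bar>f x * g x\<bar>)" by (rule sq_integrable_imp_integrable_abs_mult[OF f g])
  have f2: "integrable M (\<lambda>x. (f x)\<^sup>2)" and g2: "integrable M (\<lambda>x. (g x)\<^sup>2)"
    using f g by (auto simp: sq_integrable_def)
  have "(\<integral>x. \<bar>f x * g x\<bar> \<partial>M) \<le> L2norm M f * L2norm M g"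
    unfolding L2norm_def
  proof (rule le_sqrt_mult_of_quadratic_nonneg)
    fix t :: real
    have "0 \<le> (\<integral>x. (t * \<bar>f x\<bar> - \<bar>g x\<bar>)\<^sup>2 \<partial>M)" by simp
    also have "\<dots> = (\<integral>x. t\<^sup>2 * (f x)\<^sup>2 - 2 * t * \<bar>f x * g x\<bar> + (g x)\<^sup>2 \<partial>M)"
      by (rule Bochner_Integration.integral_cong) (auto simp: power2_eq_square abs_mult algebra_simps)
    also have "\<dots> = t\<^sup>2 * (\<integral>x. (f x)\<^sup>2 \<partial>M) - 2 * t * (\<integral>x. \<bar>f x * g x\<bar> \<partial>M) + (\<integral>x. (g x)\<^sup>2 \<partial>M)"
      using f2 g2 fg by simp
    finally show "0 \<le> \<dots>" .
  qed simp_all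
  moreover have "\<bar>\<integral>x. f x * g x \<partial>M\<bar> \<le> (\<integral>x. \<bar>f x * g x\<bar> \<partial>M)"
    using integral_norm_bound[of M "\<lambda>x. f x * g x"] by simp
  ultimately show ?thesis by linarith
qed

lemma L2norm_nonneg: "0 \<le> L2norm M f"
  unfolding L2norm_def by simp

lemma L2norm_power2: "(L2norm M f)\<^sup>2 = (\<integral>x. (f x)\<^sup>2 \<partial>M)"
  unfolding L2norm_def by simp

lemma L2norm_cmult: "L2norm M (\<lambda>x. c * f x) = \<bar>c\<bar> * L2norm M f"
  unfolding L2norm_def by (simp add: power_mult_distrib real_sqrt_mult)

lemma L2norm_abs: "L2norm M (\<lambda>x. \<bar>f x\<bar>) = L2norm M f"
  unfolding L2norm_def by simp

lemma sq_integrable_cmult: "sq_integrable M f \<Longrightarrow> sq_integrable M (\<lambda>x. c * f x)"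
  by (simp add: sq_integrable_def power_mult_distrib borel_measurable_times)

lemma sq_integrable_abs: "sq_integrable M f \<Longrightarrow> sq_integrable M (\<lambda>x. \<bar>f x\<bar>)"
  by (simp add: sq_integrable_def borel_measurable_abs)

lemma sq_integrable_diff:
  assumes "sq_integrable M f" "sq_integrable M g"
  shows "sq_integrable M (\<lambda>x. f x - g x)"
proof -
  have "integrable M (\<lambda>x. (f x)\<^sup>2 + (g x)\<^sup>2 - 2 * (f x * g x))"
    using assms sq_integrable_imp_integrable_mult[OF assms] by (simp add: sq_integrable_def)
  thus ?thesis using assms by (simp add: sq_integrable_def power2_diff algebra_simps borel_measurable_diff)
qed

lemma L2norm_eq_0_imp_AE_zero:
  assumes "sq_integrable M f" "L2norm M f = 0"
  shows "AE x in M. f x = 0"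
proof -
  have "(\<integral>x. (f x)\<^sup>2 \<partial>M) = 0" using assms(2) L2norm_power2[of M f] by simp
  hence "AE x in M. (f x)\<^sup>2 = 0"
    using assms(1) by (subst integral_nonneg_eq_0_iff_AE[symmetric]) (auto simp: sq_integrable_def)
  thus ?thesis by simp
qed

lemma (in prob_space) L2norm_le_sup:
  assumes [measurable]: "f \<in> borel_measurable M" and bound: "\<And>x. x \<in> space M \<Longrightarrow> \<bar>f x\<bar> \<le> C"
  shows "L2norm M f \<le> C"
proof -
  obtain x0 where "x0 \<in> space M" using not_empty by blast
  hence "0 \<le> C" using bound[of x0] by linarith
  have sq: "(f x)\<^sup>2 \<le> C\<^sup>2" if "x \<in> space M" for x
    using bound[OF that] abs_le_square_iff[of "f x" C] \<open>0 \<le> C\<close> by simp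
  have "integrable M (\<lambda>x. (f x)\<^sup>2)"
    using sq by (intro integrable_const_bound[where B="C\<^sup>2"]) auto
  hence "(\<integral>x. (f x)\<^sup>2 \<partial>M) \<le> (\<integral>x. C\<^sup>2 \<partial>M)"
    using sq by (intro integral_mono) auto
  also have "\<dots> = C\<^sup>2" by (simp add: prob_space)
  finally have "sqrt (\<integral>x. (f x)\<^sup>2 \<partial>M) \<le> sqrt (C\<^sup>2)" by (rule real_sqrt_le_mono)
  thus ?thesis unfolding L2norm_def using \<open>0 \<le> C\<close> by simp
qed

lemma (in prob_space) integral_abs_le_L2norm:
  assumes "sq_integrable M w" shows "(\<integral>x. \<bar>w x\<bar> \<partial>M) \<le> L2norm M w"
proof -
  have one: "sq_integrable M (\<lambda>_. 1)" unfolding sq_integrable_def by simp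
  have "L2norm M (\<lambda>_. 1::real) = 1" unfolding L2norm_def by (simp add: prob_space)
  thus ?thesis
    using abs_integral_mult_le_L2norm[OF sq_integrable_abs[OF assms] one] by (simp add: L2norm_abs)
qed

lemma (in pair_sigma_finite) integrable_product_mult:
  fixes f g :: "_ \<Rightarrow> real"
  assumes f: "integrable M1 f" and g: "integrable M2 g"
  shows "integrable (M1 \<Otimes>\<^sub>M M2) (\<lambda>(x, y). f x * g y)"
proof (subst integrable_iff_bounded, intro conjI)
  have [measurable]: "f \<in> borel_measurable M1" "g \<in> borel_measurable M2" using f g by auto
  show "(\<lambda>(x, y). f x * g y) \<in> borel_measurable (M1 \<Otimes>\<^sub>M M2)" by measurable
  have "(\<integral>\<^sup>+ p. ennreal (norm (case p of (x, y) \<Rightarrow> f x * g y)) \<partial>(M1 \<Otimes>\<^sub>M M2))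
      = (\<integral>\<^sup>+ x. \<integral>\<^sup>+ y. ennreal (norm (f x * g y)) \<partial>M2 \<partial>M1)"
    by (subst M2.nn_integral_fst[symmetric]) (auto simp: case_prod_beta)
  also have "\<dots> = (\<integral>\<^sup>+ x. ennreal (norm (f x)) \<partial>M1) * (\<integral>\<^sup>+ y. ennreal (norm (g y)) \<partial>M2)"
    by (auto simp: abs_mult ennreal_mult nn_integral_cmult nn_integral_multc intro!: nn_integral_cong)
  also have "\<dots> < \<infinity>"
    using f g by (simp add: integrable_iff_bounded ennreal_mult_less_top)
  finally show "(\<integral>\<^sup>+ p. ennreal (norm (case p of (x, y) \<Rightarrow> f x * g y)) \<partial>(M1 \<Otimes>\<^sub>M M2)) < \<infinity>" .
qed

definition bounded_measurable :: "'a measure \<Rightarrow> ('a \<Rightarrow> real) \<Rightarrow> bool" where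
  "bounded_measurable M w \<longleftrightarrow> w \<in> borel_measurable M \<and> (\<exists>C. \<forall>x\<in>space M. \<bar>w x\<bar> \<le> C)"

lemma bounded_measurable_iff_bounded:
  "bounded_measurable M w \<longleftrightarrow> w \<in> borel_measurable M \<and> bounded (w ` space M)"
  by (auto simp: bounded_measurable_def bounded_real)

lemma bounded_measurable_const: "bounded_measurable M (\<lambda>_. c)"
  by (auto simp: bounded_measurable_def)

lemma bounded_measurable_mult:
  assumes "bounded_measurable M f" "bounded_measurable M g"
  shows "bounded_measurable M (\<lambda>x. f x * g x)"
proof -
  from assms obtain C D where "\<forall>x\<in>space M. \<bar>f x\<bar> \<le> C" "\<forall>x\<in>space M. \<bar>g x\<bar> \<le> D"
    and [measurable]: "f \<in> borel_measurable M" "g \<in> borel_measurable M"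
    unfolding bounded_measurable_def by blast
  hence "\<forall>x\<in>space M. \<bar>f x * g x\<bar> \<le> C * D" by (auto simp: abs_mult intro!: mult_mono)
  thus ?thesis unfolding bounded_measurable_def by auto
qed

lemma bounded_measurable_add:
  assumes "bounded_measurable M f" "bounded_measurable M g"
  shows "bounded_measurable M (\<lambda>x. f x + g x)"
proof -
  from assms obtain C D where "\<forall>x\<in>space M. \<bar>f x\<bar> \<le> C" "\<forall>x\<in>space M. \<bar>g x\<bar> \<le> D"
    and [measurable]: "f \<in> borel_measurable M" "g \<in> borel_measurable M"
    unfolding bounded_measurable_def by blast
  hence "\<forall>x\<in>space M. \<bar>f x + g x\<bar> \<le> C + D" by (auto intro: abs_triangle_ineq[THEN order_trans] add_mono)
  thus ?thesis unfolding bounded_measurable_def by auto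
qed

lemma bounded_measurable_cmult: "bounded_measurable M f \<Longrightarrow> bounded_measurable M (\<lambda>x. c * f x)"
  by (rule bounded_measurable_mult[OF bounded_measurable_const])

lemma (in finite_measure) bounded_measurable_integrable:
  assumes "bounded_measurable M w" shows "integrable M w"
proof -
  obtain C where [measurable]: "w \<in> borel_measurable M" and "\<forall>x\<in>space M. \<bar>w x\<bar> \<le> C"
    using assms unfolding bounded_measurable_def by blast
  thus ?thesis by (intro integrable_const_bound[where B=C]) auto
qed

lemma (in finite_measure) bounded_measurable_sq_integrable:
  assumes "bounded_measurable M w" shows "sq_integrable M w"
proof -
  have "integrable M (\<lambda>x. w x * w x)"
    by (rule bounded_measurable_integrable[OF bounded_measurable_mult[OF assms assms]])
  thus ?thesis using assms unfolding sq_integrable_def bounded_measurable_def by (simp add: power2_eq_square)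
qed

lemma (in finite_measure) sq_integrable_imp_integrable: "sq_integrable M w \<Longrightarrow> integrable M w"
  unfolding sq_integrable_def by (auto intro: square_integrable_imp_integrable)

lemma uniform_limit_bounded_measurable:
  assumes lim: "uniform_limit (space M) f g sequentially"
    and f: "\<And>n. bounded_measurable M (f n)"
  shows "bounded_measurable M g"
proof -
  obtain N where N: "\<And>x. x \<in> space M \<Longrightarrow> \<bar>f N x - g x\<bar> < 1"
    using lim unfolding uniform_limit_sequentially_iff dist_real_def
    by (metis order_refl zero_less_one)
  obtain C where C: "\<And>x. x \<in> space M \<Longrightarrow> \<bar>f N x\<bar> \<le> C"
    using f[of N] unfolding bounded_measurable_def by blast
  have "\<bar>g x\<bar> \<le> C + 1" if "x \<in> space M" for x
    using N[OF that] C[OF that] by linarith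
  moreover have "g \<in> borel_measurable M"
  proof (rule borel_measurable_LIMSEQ_real)
    show "(\<lambda>n. f n x) \<longlonglongrightarrow> g x" if "x \<in> space M" for x
      using tendsto_uniform_limitI[OF lim that] .
  qed (use f in \<open>simp add: bounded_measurable_def\<close>)
  ultimately show ?thesis unfolding bounded_measurable_def by blast
qed

lemma (in prob_space) uniform_limit_not_AE_zero:
  assumes lim: "uniform_limit (space M) f g sequentially"
    and f: "\<And>n. sq_integrable M (f n)"
    and lower: "\<And>n. \<delta> \<le> (\<integral>x. (f n x)\<^sup>2 \<partial>M)" and "\<delta> > 0"
  shows "\<not> (AE x in M. g x = 0)"
proof
  assume g0: "AE x in M. g x = 0"
  define \<eta> where "\<eta> = sqrt \<delta> / 2"
  have "\<eta> > 0" unfolding \<eta>_def using \<open>\<delta> > 0\<close> by simp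
  then obtain N where N: "\<And>x. x \<in> space M \<Longrightarrow> \<bar>f N x - g x\<bar> < \<eta>"
    using lim unfolding uniform_limit_sequentially_iff dist_real_def by (metis order_refl)
  have "AE x in M. (f N x)\<^sup>2 \<le> \<eta>\<^sup>2"
    using g0 AE_space
  proof eventually_elim
    case (elim x)
    hence "\<bar>f N x\<bar> \<le> \<eta>" using N[of x] by simp
    thus ?case using abs_le_square_iff[of "f N x" \<eta>] \<open>\<eta> > 0\<close> by simp
  qed
  hence "(\<integral>x. (f N x)\<^sup>2 \<partial>M) \<le> (\<integral>x. \<eta>\<^sup>2 \<partial>M)"
    using f[of N] by (intro integral_mono_AE) (auto simp: sq_integrable_def)
  also have "\<dots> = \<delta> / 4" unfolding \<eta>_def using \<open>\<delta> > 0\<close> by (simp add: prob_space power_divide)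
  finally show False using lower[of N] \<open>\<delta> > 0\<close> by simp
qed

lemma integral_mult_pos:
  fixes f g :: "'a \<Rightarrow> real"
  assumes fg: "integrable M (\<lambda>x. f x * g x)"
    and f: "\<And>x. x \<in> space M \<Longrightarrow> 0 \<le> f x" "\<not> (AE x in M. f x = 0)"
    and g: "\<And>x. x \<in> space M \<Longrightarrow> 0 < g x"
  shows "0 < (\<integral>x. f x * g x \<partial>M)"
proof -
  have nonneg: "AE x in M. 0 \<le> f x * g x" using f(1) g by (intro AE_I2) (simp add: less_imp_le)
  have "(\<integral>x. f x * g x \<partial>M) \<noteq> 0"
  proof
    assume "(\<integral>x. f x * g x \<partial>M) = 0"
    hence "AE x in M. f x * g x = 0" using integral_nonneg_eq_0_iff_AE[OF fg nonneg] by simp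
    hence "AE x in M. f x = 0" using AE_space by eventually_elim (use g in fastforce)
    with f(2) show False by simp
  qed
  moreover have "0 \<le> (\<integral>x. f x * g x \<partial>M)" using nonneg by (rule integral_nonneg_AE)
  ultimately show ?thesis by simp
qed

section \<open>Integral operators with bounded symmetric kernels\<close>

locale sym_kernel = prob_space M for M :: "'a measure" +
  fixes k :: "'a \<Rightarrow> 'a \<Rightarrow> real" and B :: real
  assumes k_measurable[measurable]: "(\<lambda>(x, y). k x y) \<in> borel_measurable (M \<Otimes>\<^sub>M M)"
    and k_nonneg: "\<And>x y. x \<in> space M \<Longrightarrow> y \<in> space M \<Longrightarrow> 0 \<le> k x y"
    and k_le: "\<And>x y. x \<in> space M \<Longrightarrow> y \<in> space M \<Longrightarrow> k x y \<le> B"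
    and k_sym: "\<And>x y. x \<in> space M \<Longrightarrow> y \<in> space M \<Longrightarrow> k x y = k y x"
begin

definition K :: "('a \<Rightarrow> real) \<Rightarrow> 'a \<Rightarrow> real" where
  "K w = (\<lambda>x. \<integral>y. k x y * w y \<partial>M)"

lemma B_nonneg: "0 \<le> B"
proof -
  obtain x where "x \<in> space M" using not_empty by blast
  thus ?thesis using k_nonneg k_le by (meson order_trans)
qed

lemma k_measurable_Pair[measurable]: "x \<in> space M \<Longrightarrow> k x \<in> borel_measurable M"
  using measurable_Pair2[OF k_measurable] by simp

lemma K_measurable[measurable]:
  assumes [measurable]: "w \<in> borel_measurable M" shows "K w \<in> borel_measurable M"
  unfolding K_def by measurable

lemma integrable_kernel_mult:
  assumes "integrable M w" "x \<in> space M" shows "integrable M (\<lambda>y. k x y * w y)"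
proof (rule Bochner_Integration.integrable_bound[of _ "\<lambda>y. B * w y"])
  show "integrable M (\<lambda>y. B * w y)" using assms by simp
  have [measurable]: "w \<in> borel_measurable M" using assms by simp
  show "(\<lambda>y. k x y * w y) \<in> borel_measurable M" using assms(2) by measurable
  show "AE y in M. norm (k x y * w y) \<le> norm (B * w y)"
    using assms(2) k_nonneg k_le B_nonneg by (auto simp: abs_mult intro!: mult_right_mono)
qed

lemma K_cmult: "K (\<lambda>y. c * f y) = (\<lambda>x. c * K f x)"
  unfolding K_def by (simp add: ac_simps)

lemma K_add:
  assumes "integrable M f" "integrable M g" "x \<in> space M"
  shows "K (\<lambda>y. f y + g y) x = K f x + K g x"
  unfolding K_def using integrable_kernel_mult[OF assms(1,3)] integrable_kernel_mult[OF assms(2,3)]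
  by (simp add: distrib_left)

lemma K_diff:
  assumes "integrable M f" "integrable M g" "x \<in> space M"
  shows "K (\<lambda>y. f y - g y) x = K f x - K g x"
  unfolding K_def using integrable_kernel_mult[OF assms(1,3)] integrable_kernel_mult[OF assms(2,3)]
  by (simp add: right_diff_distrib)

lemma K_nonneg: "(\<And>y. y \<in> space M \<Longrightarrow> 0 \<le> w y) \<Longrightarrow> x \<in> space M \<Longrightarrow> 0 \<le> K w x"
  unfolding K_def using k_nonneg by (intro Bochner_Integration.integral_nonneg) auto

lemma K_mono:
  assumes "integrable M f" "integrable M g" "\<And>y. y \<in> space M \<Longrightarrow> f y \<le> g y" "x \<in> space M"
  shows "K f x \<le> K g x"
  unfolding K_def using assms integrable_kernel_mult[OF assms(1,4)] integrable_kernel_mult[OF assms(2,4)] k_nonneg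
  by (intro integral_mono) (auto intro!: mult_left_mono)

lemma abs_K_le: assumes "integrable M w" "x \<in> space M" shows "\<bar>K w x\<bar> \<le> K (\<lambda>y. \<bar>w y\<bar>) x"
proof -
  have "\<bar>K w x\<bar> \<le> (\<integral>y. \<bar>k x y * w y\<bar> \<partial>M)"
    unfolding K_def using integral_norm_bound[of M "\<lambda>y. k x y * w y"] by simp
  also have "\<dots> = K (\<lambda>y. \<bar>w y\<bar>) x"
    unfolding K_def using k_nonneg assms(2) by (intro Bochner_Integration.integral_cong) (auto simp: abs_mult)
  finally show ?thesis .
qed

lemma K_le_integral:
  assumes "integrable M w" "\<And>y. y \<in> space M \<Longrightarrow> 0 \<le> w y" "x \<in> space M"
  shows "K w x \<le> B * (\<integral>y. w y \<partial>M)"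
proof -
  have "K w x \<le> (\<integral>y. B * w y \<partial>M)"
    unfolding K_def using assms integrable_kernel_mult[OF assms(1,3)] k_le
    by (intro integral_mono) (auto intro!: mult_right_mono)
  thus ?thesis by simp
qed

lemma abs_K_le_integral_abs:
  assumes "integrable M w" "x \<in> space M" shows "\<bar>K w x\<bar> \<le> B * (\<integral>y. \<bar>w y\<bar> \<partial>M)"
  using abs_K_le[OF assms] K_le_integral[of "\<lambda>y. \<bar>w y\<bar>"] assms by fastforce

lemma abs_K_le_sup:
  assumes "integrable M v" "\<And>y. y \<in> space M \<Longrightarrow> \<bar>v y\<bar> \<le> t" "x \<in> space M"
  shows "\<bar>K v x\<bar> \<le> B * t"
proof -
  have "(\<integral>y. \<bar>v y\<bar> \<partial>M) \<le> (\<integral>y. t \<partial>M)" using assms by (intro integral_mono) auto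
  also have "\<dots> = t" by (simp add: prob_space)
  finally show ?thesis
    using abs_K_le_integral_abs[OF assms(1,3)] B_nonneg by (meson mult_left_mono order_trans)
qed

lemma K_bounded_measurable: "integrable M w \<Longrightarrow> bounded_measurable M (K w)"
  unfolding bounded_measurable_def using abs_K_le_integral_abs by auto

lemma K_integrable: "integrable M w \<Longrightarrow> integrable M (K w)"
  by (rule bounded_measurable_integrable[OF K_bounded_measurable])

lemma K_self_adjoint:
  assumes f: "integrable M f" and g: "integrable M g"
  shows "(\<integral>x. K f x * g x \<partial>M) = (\<integral>x. f x * K g x \<partial>M)"
proof -
  interpret P: pair_sigma_finite M M
    by (simp add: pair_sigma_finite_def sigma_finite_measure_axioms)
  have [measurable]: "f \<in> borel_measurable M" "g \<in> borel_measurable M" using f g by auto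
  define h where "h x y = k x y * f y * g x" for x y
  have [measurable]: "(\<lambda>(x, y). h x y) \<in> borel_measurable (M \<Otimes>\<^sub>M M)"
    unfolding h_def by measurable
  have h_int: "integrable (M \<Otimes>\<^sub>M M) (\<lambda>(x, y). h x y)"
  proof (rule Bochner_Integration.integrable_bound)
    show "integrable (M \<Otimes>\<^sub>M M) (\<lambda>p. B * (case p of (x, y) \<Rightarrow> g x * f y))"
      using P.integrable_product_mult[OF g f] by simp
    show "AE p in M \<Otimes>\<^sub>M M. norm (case p of (x, y) \<Rightarrow> h x y) \<le> norm (B * (case p of (x, y) \<Rightarrow> g x * f y))"
    proof (rule AE_I2)
      fix p assume "p \<in> space (M \<Otimes>\<^sub>M M)"
      then obtain x y where p: "p = (x, y)" "x \<in> space M" "y \<in> space M"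
        by (auto simp: space_pair_measure)
      have "k x y * \<bar>g x * f y\<bar> \<le> B * \<bar>g x * f y\<bar>"
        using k_le[OF p(2,3)] by (rule mult_right_mono) simp
      thus "norm (case p of (x, y) \<Rightarrow> h x y) \<le> norm (B * (case p of (x, y) \<Rightarrow> g x * f y))"
        using p k_nonneg[OF p(2,3)] B_nonneg by (simp add: h_def abs_mult ac_simps)
    qed
  qed simp
  have "(\<integral>x. K f x * g x \<partial>M) = (\<integral>x. \<integral>y. h x y \<partial>M \<partial>M)"
    unfolding K_def h_def by simp
  also have "\<dots> = (\<integral>y. \<integral>x. h x y \<partial>M \<partial>M)"
    using P.Fubini_integral[OF h_int] by simp
  also have "\<dots> = (\<integral>y. f y * K g y \<partial>M)"
  proof (rule Bochner_Integration.integral_cong[OF refl])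
    fix y assume y: "y \<in> space M"
    have "(\<integral>x. h x y \<partial>M) = (\<integral>x. f y * (k y x * g x) \<partial>M)"
      by (intro Bochner_Integration.integral_cong) (simp_all add: h_def k_sym[OF _ y])
    thus "(\<integral>x. h x y \<partial>M) = f y * K g y" unfolding K_def by simp
  qed
  finally show ?thesis .
qed

abbreviation norm_K :: real where
  "norm_K \<equiv> opnorm2 M K"

lemma L2norm_K_le_B: assumes "sq_integrable M w" shows "L2norm M (K w) \<le> B * L2norm M w"
proof -
  have w: "integrable M w" using sq_integrable_imp_integrable[OF assms] .
  have "L2norm M (K w) \<le> B * (\<integral>y. \<bar>w y\<bar> \<partial>M)"
    using w abs_K_le_integral_abs[OF w] by (intro L2norm_le_sup) auto
  also have "\<dots> \<le> B * L2norm M w"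
    using integral_abs_le_L2norm[OF assms] B_nonneg by (rule mult_left_mono)
  finally show ?thesis .
qed

lemma bdd_above_L2norm_K: "bdd_above {L2norm M (K w) | w. sq_integrable M w \<and> L2norm M w \<le> 1}"
proof (rule bdd_aboveI[where M=B], clarsimp)
  fix w assume "sq_integrable M w" "L2norm M w \<le> 1"
  thus "L2norm M (K w) \<le> B"
    using L2norm_K_le_B[of w] mult_left_mono[of "L2norm M w" 1 B] B_nonneg by simp
qed

lemma L2norm_K_le_norm_K:
  "sq_integrable M w \<Longrightarrow> L2norm M w \<le> 1 \<Longrightarrow> L2norm M (K w) \<le> norm_K"
  unfolding opnorm2_def by (rule cSup_upper[OF _ bdd_above_L2norm_K]) auto

lemma norm_K_le:
  assumes "\<And>w. sq_integrable M w \<Longrightarrow> L2norm M w \<le> 1 \<Longrightarrow> L2norm M (K w) \<le> r"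
  shows "norm_K \<le> r"
proof -
  have "sq_integrable M (\<lambda>_. 0)" "L2norm M (\<lambda>_. 0::real) \<le> 1"
    by (simp_all add: sq_integrable_def L2norm_def)
  thus ?thesis unfolding opnorm2_def using assms by (intro cSup_least) auto
qed

lemma norm_K_nonneg: "0 \<le> norm_K"
proof -
  have "sq_integrable M (\<lambda>_. 0)" "L2norm M (\<lambda>_. 0::real) \<le> 1"
    by (simp_all add: sq_integrable_def L2norm_def)
  from L2norm_K_le_norm_K[OF this] show ?thesis using L2norm_nonneg order_trans by blast
qed

lemma norm_K_le_B: "norm_K \<le> B"
  using L2norm_K_le_B mult_left_mono[of _ 1 B] B_nonneg by (intro norm_K_le) fastforce

lemma K_AE_zero:
  assumes [measurable]: "w \<in> borel_measurable M"
    and "AE y in M. w y = 0" "x \<in> space M"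
  shows "K w x = 0"
proof -
  have "K w x = (\<integral>y. 0 \<partial>M)" unfolding K_def using assms by (intro integral_cong_AE) auto
  thus ?thesis by simp
qed

lemma L2norm_K_le: assumes w: "sq_integrable M w" shows "L2norm M (K w) \<le> norm_K * L2norm M w"
proof (cases "L2norm M w = 0")
  case True
  have [measurable]: "w \<in> borel_measurable M" using w by (simp add: sq_integrable_def)
  have "L2norm M (K w) \<le> 0"
    using K_AE_zero[OF _ L2norm_eq_0_imp_AE_zero[OF w True]] by (intro L2norm_le_sup) auto
  thus ?thesis using True by simp
next
  case False
  define r where "r = L2norm M w"
  have r: "r > 0" using False L2norm_nonneg[of M w] unfolding r_def by simp
  have "L2norm M (K (\<lambda>x. (1 / r) * w x)) \<le> norm_K"
    using r by (intro L2norm_K_le_norm_K sq_integrable_cmult w) (simp only: L2norm_cmult, simp add: r_def)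
  moreover have "L2norm M (K (\<lambda>x. (1 / r) * w x)) = L2norm M (K w) / r"
    unfolding K_cmult L2norm_cmult using r by simp
  ultimately show ?thesis using r by (simp add: r_def field_simps)
qed

lemma Kpow_integrable: "integrable M w \<Longrightarrow> integrable M ((K ^^ n) w)"
  by (induction n) (auto intro: K_integrable)

lemma Kpow_Suc_bounded_measurable: "integrable M w \<Longrightarrow> bounded_measurable M ((K ^^ Suc n) w)"
  by (simp add: K_bounded_measurable Kpow_integrable)

lemma Kpow_sq_integrable: "sq_integrable M w \<Longrightarrow> sq_integrable M ((K ^^ n) w)"
  by (cases n) (auto intro: bounded_measurable_sq_integrable Kpow_Suc_bounded_measurable
                             sq_integrable_imp_integrable simp del: funpow.simps)

lemma Kpow_self_adjoint:
  assumes "integrable M f" "integrable M g"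
  shows "(\<integral>x. (K ^^ n) f x * g x \<partial>M) = (\<integral>x. f x * (K ^^ n) g x \<partial>M)"
  using assms(2)
proof (induction n arbitrary: g)
  case (Suc n)
  have "(\<integral>x. (K ^^ Suc n) f x * g x \<partial>M) = (\<integral>x. (K ^^ n) f x * K g x \<partial>M)"
    using K_self_adjoint[OF Kpow_integrable[OF assms(1)] Suc.prems] by simp
  also have "\<dots> = (\<integral>x. f x * (K ^^ n) (K g) x \<partial>M)"
    using Suc.IH[OF K_integrable[OF Suc.prems]] .
  finally show ?case by (simp add: funpow_swap1)
qed simp

lemma Kpow_nonneg: "(\<And>y. y \<in> space M \<Longrightarrow> 0 \<le> w y) \<Longrightarrow> x \<in> space M \<Longrightarrow> 0 \<le> (K ^^ n) w x"
  by (induction n arbitrary: x) (auto intro: K_nonneg)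

lemma abs_Kpow_le:
  assumes "integrable M w" "x \<in> space M"
  shows "\<bar>(K ^^ n) w x\<bar> \<le> (K ^^ n) (\<lambda>y. \<bar>w y\<bar>) x"
  using assms(2)
proof (induction n arbitrary: x)
  case (Suc n)
  have "\<bar>(K ^^ Suc n) w x\<bar> \<le> K (\<lambda>y. \<bar>(K ^^ n) w y\<bar>) x"
    using abs_K_le[OF Kpow_integrable[OF assms(1)] Suc.prems] by simp
  also have "\<dots> \<le> K ((K ^^ n) (\<lambda>y. \<bar>w y\<bar>)) x"
    using Suc.prems Suc.IH assms(1) by (intro K_mono Kpow_integrable integrable_abs) auto
  finally show ?case by simp
qed simp

subsection \<open>Power iteration\<close>

lemma L2norm_Kpow_power2_le:
  assumes w: "sq_integrable M w" "L2norm M w \<le> 1"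
  shows "(L2norm M ((K ^^ n) w))\<^sup>2 \<le> L2norm M ((K ^^ (2 * n)) w)"
proof -
  have "(L2norm M ((K ^^ n) w))\<^sup>2 = (\<integral>x. (K ^^ n) w x * (K ^^ n) w x \<partial>M)"
    unfolding L2norm_power2 by (simp add: power2_eq_square)
  also have "\<dots> = (\<integral>x. w x * (K ^^ (2 * n)) w x \<partial>M)"
    using sq_integrable_imp_integrable[OF w(1)]
    by (simp add: Kpow_self_adjoint Kpow_integrable mult_2 funpow_add)
  also have "\<dots> \<le> L2norm M w * L2norm M ((K ^^ (2 * n)) w)"
    using abs_integral_mult_le_L2norm[OF w(1) Kpow_sq_integrable[OF w(1)], of "2 * n"] by simp
  also have "\<dots> \<le> L2norm M ((K ^^ (2 * n)) w)"
    using mult_right_mono[OF w(2) L2norm_nonneg] by simp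
  finally show ?thesis .
qed

lemma L2norm_K_power_le:
  assumes w: "sq_integrable M w" "L2norm M w \<le> 1"
  shows "L2norm M (K w) ^ (2 ^ j) \<le> L2norm M ((K ^^ (2 ^ j)) w)"
proof (induction j)
  case (Suc j)
  have "L2norm M (K w) ^ (2 ^ Suc j) = (L2norm M (K w) ^ (2 ^ j))\<^sup>2"
    by (simp add: power_mult[symmetric] mult.commute)
  also have "\<dots> \<le> (L2norm M ((K ^^ (2 ^ j)) w))\<^sup>2"
    using Suc.IH by (intro power_mono) (simp_all add: L2norm_nonneg)
  also have "\<dots> \<le> L2norm M ((K ^^ (2 ^ Suc j)) w)"
    using L2norm_Kpow_power2_le[OF w, of "2 ^ j"] by simp
  finally show ?case .
qed simp

lemma L2norm_Kpow_Suc_le: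
  assumes w: "sq_integrable M w"
  shows "L2norm M ((K ^^ Suc n) w) \<le> B * L2norm M w * L2norm M ((K ^^ n) (\<lambda>_. 1))"
proof (rule L2norm_le_sup)
  have wi: "integrable M w" using sq_integrable_imp_integrable[OF w] .
  have one: "sq_integrable M (\<lambda>_. 1)" by (simp add: sq_integrable_def)
  show "(K ^^ Suc n) w \<in> borel_measurable M" using Kpow_integrable[OF wi] by auto
  fix x assume x: "x \<in> space M"
  have "\<bar>(K ^^ Suc n) w x\<bar> \<le> K ((K ^^ n) (\<lambda>y. \<bar>w y\<bar>)) x"
    using abs_Kpow_le[OF wi x, of "Suc n"] by simp
  also have "\<dots> \<le> B * (\<integral>y. (K ^^ n) (\<lambda>y. \<bar>w y\<bar>) y * 1 \<partial>M)"
    using wi x by (simp add: K_le_integral Kpow_integrable Kpow_nonneg)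
  also have "(\<integral>y. (K ^^ n) (\<lambda>y. \<bar>w y\<bar>) y * 1 \<partial>M) = (\<integral>y. \<bar>w y\<bar> * (K ^^ n) (\<lambda>_. 1) y \<partial>M)"
    using wi by (intro Kpow_self_adjoint) auto
  also have "\<dots> \<le> L2norm M w * L2norm M ((K ^^ n) (\<lambda>_. 1))"
    using abs_integral_mult_le_L2norm[OF sq_integrable_abs[OF w] Kpow_sq_integrable[OF one], of n]
    by (simp add: L2norm_abs)
  finally show "\<bar>(K ^^ Suc n) w x\<bar> \<le> B * L2norm M w * L2norm M ((K ^^ n) (\<lambda>_. 1))"
    using B_nonneg by (simp add: mult_left_mono mult.assoc)
qed

lemma norm_K_power_le: "norm_K ^ (2 ^ j) \<le> B * L2norm M ((K ^^ (2 ^ j - 1)) (\<lambda>_. 1))"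
proof -
  define N :: nat where "N = 2 ^ j"
  define C where "C = B * L2norm M ((K ^^ (N - 1)) (\<lambda>_. 1))"
  have N: "N > 0" and C: "0 \<le> C" unfolding N_def C_def using B_nonneg L2norm_nonneg[of M] by simp_all
  have "L2norm M (K w) \<le> root N C" if w: "sq_integrable M w" "L2norm M w \<le> 1" for w
  proof -
    have "L2norm M (K w) ^ N \<le> L2norm M ((K ^^ Suc (N - 1)) w)"
      using L2norm_K_power_le[OF w, of j] N unfolding N_def by simp
    also have "\<dots> \<le> B * L2norm M w * L2norm M ((K ^^ (N - 1)) (\<lambda>_. 1))"
      by (rule L2norm_Kpow_Suc_le[OF w(1)])
    also have "\<dots> \<le> C"
      unfolding C_def using w(2) B_nonneg
      by (intro mult_right_mono mult_left_le) (simp_all add: L2norm_nonneg)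
    finally have "root N (L2norm M (K w) ^ N) \<le> root N C" using N by simp
    thus ?thesis using N by (simp add: real_root_power_cancel L2norm_nonneg)
  qed
  hence "norm_K \<le> root N C" by (rule norm_K_le)
  hence "norm_K ^ N \<le> root N C ^ N" using norm_K_nonneg by (rule power_mono)
  thus ?thesis using N C unfolding C_def N_def by simp
qed

definition moment :: "nat \<Rightarrow> real" where
  "moment p = (\<integral>x. (K ^^ p) (\<lambda>_. 1) x \<partial>M)"

lemma integral_Kpow_one_mult: "(\<integral>x. (K ^^ a) (\<lambda>_. 1) x * (K ^^ b) (\<lambda>_. 1) x \<partial>M) = moment (a + b)"
  by (simp add: Kpow_self_adjoint Kpow_integrable moment_def funpow_add)

lemma L2norm_Kpow_one_power2: "(L2norm M ((K ^^ n) (\<lambda>_. 1)))\<^sup>2 = moment (2 * n)"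
  unfolding L2norm_power2 mult_2 using integral_Kpow_one_mult[of n n] by (simp add: power2_eq_square)

definition normalized_moment :: "nat \<Rightarrow> real" where
  "normalized_moment n = moment (2 * n) / norm_K ^ (2 * n)"

lemma uniform_limit_K:
  assumes lim: "uniform_limit (space M) f g sequentially"
    and f: "\<And>n. integrable M (f n)" and g: "integrable M g"
  shows "uniform_limit (space M) (\<lambda>n. K (f n)) (K g) sequentially"
  unfolding uniform_limit_sequentially_iff dist_real_def
proof (intro allI impI)
  fix e :: real assume "e > 0"
  hence "e / (B + 1) > 0" using B_nonneg by simp
  then obtain N where N: "\<And>n x. n \<ge> N \<Longrightarrow> x \<in> space M \<Longrightarrow> \<bar>f n x - g x\<bar> < e / (B + 1)"
    using lim unfolding uniform_limit_sequentially_iff dist_real_def by blast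
  have "\<bar>K (f n) x - K g x\<bar> < e" if "n \<ge> N" "x \<in> space M" for n x
  proof -
    have "\<bar>K (f n) x - K g x\<bar> = \<bar>K (\<lambda>y. f n y - g y) x\<bar>"
      using K_diff[OF f g \<open>x \<in> space M\<close>] by simp
    also have "\<dots> \<le> B * (e / (B + 1))"
      using N[OF \<open>n \<ge> N\<close>] f g \<open>x \<in> space M\<close> by (intro abs_K_le_sup) (auto intro: less_imp_le)
    also have "\<dots> < e" using \<open>e > 0\<close> B_nonneg by (simp add: field_simps)
    finally show ?thesis .
  qed
  thus "\<exists>N. \<forall>n\<ge>N. \<forall>x\<in>space M. \<bar>K (f n) x - K g x\<bar> < e" by blast
qed

definition iterate :: "nat \<Rightarrow> 'a \<Rightarrow> real" where
  "iterate p = (\<lambda>x. (1 / norm_K ^ p) * (K ^^ p) (\<lambda>_. 1) x)"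

lemma iterate_sq_integrable: "sq_integrable M (iterate p)"
  unfolding iterate_def by (intro sq_integrable_cmult Kpow_sq_integrable) (simp add: sq_integrable_def)

lemma iterate_integrable: "integrable M (iterate p)"
  by (rule sq_integrable_imp_integrable[OF iterate_sq_integrable])

lemma iterate_Suc_bounded_measurable: "bounded_measurable M (iterate (Suc p))"
  unfolding iterate_def by (intro bounded_measurable_cmult Kpow_Suc_bounded_measurable) simp

lemma iterate_nonneg: "x \<in> space M \<Longrightarrow> 0 \<le> iterate p x"
  unfolding iterate_def using norm_K_nonneg by (simp add: Kpow_nonneg)

lemma integral_iterate_mult: "(\<integral>x. iterate a x * iterate b x \<partial>M) = moment (a + b) / norm_K ^ (a + b)"
proof -
  have "(\<integral>x. iterate a x * iterate b x \<partial>M)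
      = (\<integral>x. (1 / norm_K ^ (a + b)) * ((K ^^ a) (\<lambda>_. 1) x * (K ^^ b) (\<lambda>_. 1) x) \<partial>M)"
    unfolding iterate_def by (simp add: power_add field_simps)
  thus ?thesis by (simp add: integral_Kpow_one_mult)
qed

context
  assumes norm_K_pos: "norm_K > 0"
begin

lemma B_pos: "B > 0"
  using norm_K_pos norm_K_le_B by simp

lemma normalized_moment_decseq: "decseq normalized_moment"
proof (rule decseq_SucI)
  fix n
  have "moment (2 * Suc n) = (L2norm M (K ((K ^^ n) (\<lambda>_. 1))))\<^sup>2"
    using L2norm_Kpow_one_power2[of "Suc n"] by simp
  also have "\<dots> \<le> (norm_K * L2norm M ((K ^^ n) (\<lambda>_. 1)))\<^sup>2"
    using L2norm_K_le[OF Kpow_sq_integrable] by (intro power_mono) (auto simp: sq_integrable_def L2norm_nonneg)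
  also have "\<dots> = norm_K\<^sup>2 * moment (2 * n)" by (simp add: power_mult_distrib L2norm_Kpow_one_power2)
  finally show "normalized_moment (Suc n) \<le> normalized_moment n"
    unfolding normalized_moment_def using norm_K_pos
    by (simp add: field_simps power_add power2_eq_square)
qed

lemma normalized_moment_lower_bound: "(norm_K / B)\<^sup>2 \<le> normalized_moment n"
proof -
  define p :: nat where "p = 2 ^ n - 1"
  have "n < 2 ^ n" by (rule less_exp)
  hence p: "Suc p = 2 ^ n" and "n \<le> p" unfolding p_def by arith+
  have "norm_K ^ Suc p \<le> B * L2norm M ((K ^^ p) (\<lambda>_. 1))"
    using norm_K_power_le[of n] unfolding p p_def by simp
  hence "(norm_K ^ Suc p)\<^sup>2 \<le> (B * L2norm M ((K ^^ p) (\<lambda>_. 1)))\<^sup>2"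
    using norm_K_pos by (intro power_mono) auto
  hence "norm_K\<^sup>2 * norm_K ^ (2 * p) \<le> B\<^sup>2 * moment (2 * p)"
    by (simp add: power_mult_distrib L2norm_Kpow_one_power2 power_mult[symmetric] power_add ac_simps)
  hence "(norm_K / B)\<^sup>2 \<le> normalized_moment p"
    unfolding normalized_moment_def using norm_K_pos B_pos by (simp add: field_simps power_divide)
  also have "\<dots> \<le> normalized_moment n"
    using normalized_moment_decseq \<open>n \<le> p\<close> by (simp add: decseq_def)
  finally show ?thesis .
qed

lemma K_iterate: "K (iterate p) = (\<lambda>x. norm_K * iterate (Suc p) x)"
  unfolding iterate_def K_cmult using norm_K_pos by (auto simp: field_simps)

lemma L2norm_iterate_diff_power2:
  "(L2norm M (\<lambda>x. iterate (2 * n) x - iterate (2 * m) x))\<^sup>2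
     = normalized_moment (2 * n) + normalized_moment (2 * m) - 2 * normalized_moment (n + m)"
proof -
  have i: "integrable M (\<lambda>x. iterate a x * iterate b x)" for a b
    using sq_integrable_imp_integrable_mult[OF iterate_sq_integrable iterate_sq_integrable] .
  have "(L2norm M (\<lambda>x. iterate (2 * n) x - iterate (2 * m) x))\<^sup>2
     = (\<integral>x. iterate (2 * n) x * iterate (2 * n) x + iterate (2 * m) x * iterate (2 * m) x
             - 2 * (iterate (2 * n) x * iterate (2 * m) x) \<partial>M)"
    unfolding L2norm_power2 by (intro Bochner_Integration.integral_cong) (auto simp: power2_eq_square algebra_simps)
  also have "\<dots> = normalized_moment (2 * n) + normalized_moment (2 * m) - 2 * normalized_moment (n + m)"
    using i by (simp add: integral_iterate_mult normalized_moment_def algebra_simps)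
  finally show ?thesis .
qed

lemma abs_odd_iterate_diff_le:
  assumes x: "x \<in> space M"
  shows "\<bar>iterate (Suc (2 * n)) x - iterate (Suc (2 * m)) x\<bar>
           \<le> B / norm_K * sqrt (normalized_moment (2 * n) + normalized_moment (2 * m) - 2 * normalized_moment (n + m))"
proof -
  let ?d = "\<lambda>y. iterate (2 * n) y - iterate (2 * m) y"
  have "iterate (Suc (2 * n)) x - iterate (Suc (2 * m)) x = K ?d x / norm_K"
    using K_diff[OF iterate_integrable iterate_integrable x] norm_K_pos
    by (simp add: K_iterate field_simps)
  moreover have "\<bar>K ?d x\<bar> \<le> B * L2norm M ?d"
  proof -
    have "\<bar>K ?d x\<bar> \<le> B * (\<integral>y. \<bar>?d y\<bar> \<partial>M)"
      using x by (intro abs_K_le_integral_abs) (simp add: iterate_integrable)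
    also have "\<dots> \<le> B * L2norm M ?d"
      using B_nonneg sq_integrable_diff[OF iterate_sq_integrable iterate_sq_integrable]
      by (intro mult_left_mono integral_abs_le_L2norm)
    finally show ?thesis .
  qed
  moreover have "L2norm M ?d
      = sqrt (normalized_moment (2 * n) + normalized_moment (2 * m) - 2 * normalized_moment (n + m))"
    using L2norm_iterate_diff_power2[of n m] L2norm_nonneg[of M ?d] by (metis real_sqrt_unique)
  ultimately show ?thesis using norm_K_pos by (simp add: divide_right_mono)
qed

lemma odd_iterates_uniformly_Cauchy: "uniformly_Cauchy_on (space M) (\<lambda>n. iterate (Suc (2 * n)))"
proof (rule uniformly_Cauchy_onI)
  fix e :: real assume e: "e > 0"
  let ?c = normalized_moment
  obtain L where L: "?c \<longlonglongrightarrow> L"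
    using decseq_convergent[OF normalized_moment_decseq]
      normalized_moment_lower_bound by blast
  define \<epsilon> where "\<epsilon> = (e * norm_K / B)\<^sup>2 / 4"
  have "\<epsilon> > 0" unfolding \<epsilon>_def using e norm_K_pos B_pos by simp
  then obtain N where N: "\<And>p. p \<ge> N \<Longrightarrow> \<bar>?c p - L\<bar> < \<epsilon>"
    using LIMSEQ_D[OF L] by (metis real_norm_def)
  have "\<bar>iterate (Suc (2 * n)) x - iterate (Suc (2 * m)) x\<bar> < e"
    if "n \<ge> N" "m \<ge> N" "x \<in> space M" for n m x
  proof -
    have "\<bar>?c (2 * n) - L\<bar> < \<epsilon>" "\<bar>?c (2 * m) - L\<bar> < \<epsilon>" "\<bar>?c (n + m) - L\<bar> < \<epsilon>"
      using that by (auto intro!: N)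
    hence "?c (2 * n) + ?c (2 * m) - 2 * ?c (n + m) < 4 * \<epsilon>" by linarith
    hence "?c (2 * n) + ?c (2 * m) - 2 * ?c (n + m) < (e * norm_K / B)\<^sup>2" by (simp add: \<epsilon>_def)
    hence "sqrt (?c (2 * n) + ?c (2 * m) - 2 * ?c (n + m)) < sqrt ((e * norm_K / B)\<^sup>2)"
      by (rule real_sqrt_less_mono)
    hence "sqrt (?c (2 * n) + ?c (2 * m) - 2 * ?c (n + m)) < e * norm_K / B"
      using e norm_K_pos B_pos by simp
    hence "B / norm_K * sqrt (?c (2 * n) + ?c (2 * m) - 2 * ?c (n + m)) < e"
      using norm_K_pos B_pos by (simp add: field_simps)
    thus ?thesis using abs_odd_iterate_diff_le[OF \<open>x \<in> space M\<close>, of n m] by linarith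
  qed
  thus "\<exists>N. \<forall>x\<in>space M. \<forall>m\<ge>N. \<forall>n\<ge>N. dist (iterate (Suc (2 * m)) x) (iterate (Suc (2 * n)) x) < e"
    by (auto simp: dist_real_def)
qed

lemma exists_nonneg_eigenfunction_K_square:
  obtains U where "bounded_measurable M U" "\<And>x. x \<in> space M \<Longrightarrow> 0 \<le> U x"
    "\<not> (AE x in M. U x = 0)" "\<And>x. x \<in> space M \<Longrightarrow> K (K U) x = norm_K\<^sup>2 * U x"
proof -
  let ?u = "\<lambda>n. iterate (Suc (2 * n))"
  obtain U where lim: "uniform_limit (space M) ?u U sequentially"
    using Cauchy_uniformly_convergent[OF odd_iterates_uniformly_Cauchy]
    unfolding uniformly_convergent_on_def by blast
  have U: "bounded_measurable M U"
    using lim iterate_Suc_bounded_measurable by (rule uniform_limit_bounded_measurable)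
  have U_int: "integrable M U" by (rule bounded_measurable_integrable[OF U])
  have pointwise: "(\<lambda>n. ?u n x) \<longlonglongrightarrow> U x" if "x \<in> space M" for x
    using tendsto_uniform_limitI[OF lim that] .
  have U_nonneg: "0 \<le> U x" if "x \<in> space M" for x
    using pointwise[OF that] iterate_nonneg[OF that] by (intro LIMSEQ_le_const) auto
  have U_not_zero: "\<not> (AE x in M. U x = 0)"
  proof (rule uniform_limit_not_AE_zero[OF lim iterate_sq_integrable])
    show "(norm_K / B)\<^sup>2 \<le> (\<integral>x. (?u n x)\<^sup>2 \<partial>M)" for n
      using normalized_moment_lower_bound[of "Suc (2 * n)"]
      by (simp add: power2_eq_square integral_iterate_mult normalized_moment_def mult_2)
    show "(norm_K / B)\<^sup>2 > 0" using norm_K_pos B_pos by simp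
  qed
  have U_eigen: "K (K U) x = norm_K\<^sup>2 * U x" if x: "x \<in> space M" for x
  proof (rule LIMSEQ_unique)
    have "uniform_limit (space M) (\<lambda>n. K (K (?u n))) (K (K U)) sequentially"
      by (intro uniform_limit_K lim K_integrable iterate_integrable U_int)
    thus "(\<lambda>n. K (K (?u n)) x) \<longlonglongrightarrow> K (K U) x" by (rule tendsto_uniform_limitI[OF _ x])
    have "K (K (?u n)) = (\<lambda>x. norm_K\<^sup>2 * ?u (Suc n) x)" for n
      by (simp add: K_iterate K_cmult power2_eq_square mult.assoc)
    thus "(\<lambda>n. K (K (?u n)) x) \<longlonglongrightarrow> norm_K\<^sup>2 * U x"
      using LIMSEQ_Suc[OF pointwise[OF x]] by (simp add: tendsto_mult_left)
  qed
  show ?thesis by (rule that[OF U U_nonneg U_not_zero U_eigen])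
qed

end

lemma exists_nonneg_eigenfunction:
  obtains f where "bounded_measurable M f" "\<And>x. x \<in> space M \<Longrightarrow> 0 \<le> f x"
    "\<not> (AE x in M. f x = 0)" "AE x in M. K f x = norm_K * f x"
proof (cases "norm_K = 0")
  case True
  have one: "sq_integrable M (\<lambda>_. 1)" by (simp add: sq_integrable_def)
  have "L2norm M (K (\<lambda>_. 1)) = 0"
    using L2norm_K_le[OF one] True L2norm_nonneg[of M] by (simp add: order_antisym)
  hence "AE x in M. K (\<lambda>_. 1) x = 0"
    by (intro L2norm_eq_0_imp_AE_zero bounded_measurable_sq_integrable K_bounded_measurable) simp
  show ?thesis
  proof (rule that[of "\<lambda>_. 1"])
    show "\<not> (AE x in M. (1::real) = 0)" using AE_False prob_space_axioms prob_space_def by auto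
  qed (use \<open>AE x in M. K (\<lambda>_. 1) x = 0\<close> True bounded_measurable_const in simp_all)
next
  case False
  hence norm_K_pos: "norm_K > 0" using norm_K_nonneg by simp
  obtain U where U: "bounded_measurable M U" "\<And>x. x \<in> space M \<Longrightarrow> 0 \<le> U x"
    "\<not> (AE x in M. U x = 0)" "\<And>x. x \<in> space M \<Longrightarrow> K (K U) x = norm_K\<^sup>2 * U x"
    using exists_nonneg_eigenfunction_K_square[OF norm_K_pos] by blast
  have U_int: "integrable M U" by (rule bounded_measurable_integrable[OF U(1)])
  define f where "f x = K U x + norm_K * U x" for x
  have KU_nonneg: "0 \<le> K U x" if "x \<in> space M" for x using U(2) that by (rule K_nonneg)
  show ?thesis
  proof (rule that)
    show "bounded_measurable M f"
      unfolding f_def using U(1) U_int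
      by (intro bounded_measurable_add bounded_measurable_cmult K_bounded_measurable)
    show "0 \<le> f x" if "x \<in> space M" for x
      unfolding f_def using KU_nonneg[OF that] U(2)[OF that] norm_K_nonneg by simp
    show "\<not> (AE x in M. f x = 0)"
    proof
      assume "AE x in M. f x = 0"
      hence "AE x in M. U x = 0"
        using AE_space by eventually_elim
          (use KU_nonneg U(2) norm_K_pos in \<open>simp add: f_def add_nonneg_eq_0_iff\<close>)
      with U(3) show False by simp
    qed
    have "K f x = norm_K * f x" if x: "x \<in> space M" for x
    proof -
      have "K f x = K (K U) x + K (\<lambda>y. norm_K * U y) x"
        unfolding f_def using K_add[OF K_integrable[OF U_int] _ x, of "\<lambda>y. norm_K * U y"] U_int by simp
      also have "\<dots> = norm_K * f x"
        by (simp only: U(4)[OF x] K_cmult) (simp add: f_def power2_eq_square algebra_simps)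
      finally show ?thesis .
    qed
    thus "AE x in M. K f x = norm_K * f x" by simp
  qed
qed

lemma eigenvalue_eq_one_minus_ratio:
  assumes f: "bounded_measurable M f" and eigen: "AE x in M. K f x = \<mu> * f x"
    and g: "bounded_measurable M g" and h: "bounded_measurable M h"
    and g_eq: "\<And>x. x \<in> space M \<Longrightarrow> g x = h x + K g x"
    and nonzero: "(\<integral>x. f x * g x \<partial>M) \<noteq> 0"
  shows "\<mu> = 1 - (\<integral>x. f x * h x \<partial>M) / (\<integral>x. f x * g x \<partial>M)"
proof -
  have [measurable]: "f \<in> borel_measurable M" "g \<in> borel_measurable M"
    using f g by (simp_all add: bounded_measurable_def)
  have int: "integrable M f" "integrable M g"
    using f g by (simp_all add: bounded_measurable_integrable)
  have "(\<integral>x. f x * g x \<partial>M) = (\<integral>x. f x * h x + f x * K g x \<partial>M)"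
    using g_eq by (intro Bochner_Integration.integral_cong) (simp_all add: distrib_left)
  also have "\<dots> = (\<integral>x. f x * h x \<partial>M) + (\<integral>x. f x * K g x \<partial>M)"
    using f h K_bounded_measurable[OF int(2)]
    by (intro Bochner_Integration.integral_add bounded_measurable_integrable bounded_measurable_mult)
  also have "(\<integral>x. f x * K g x \<partial>M) = (\<integral>x. K f x * g x \<partial>M)"
    using K_self_adjoint[OF int] by simp
  also have "\<dots> = \<mu> * (\<integral>x. f x * g x \<partial>M)"
    using eigen by (subst integral_cong_AE[where g="\<lambda>x. \<mu> * (f x * g x)"]) auto
  finally show ?thesis using nonzero by (simp add: field_simps)
qed

end

section \<open>The quadratic vector equation\<close>

lemma Fop_eq_K:
  assumes "sym_kernel M (\<lambda>x y. cmod (u x) * s x y * cmod (u y)) B"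
  shows "Fop M s u = sym_kernel.K M (\<lambda>x y. cmod (u x) * s x y * cmod (u y))"
  by (intro ext) (unfold Fop_def sym_kernel.K_def[OF assms], simp add: mult.assoc)

lemma qve_solution_sym_kernel:
  assumes "prob_space M"
    and s_meas: "(\<lambda>(x, y). s x y) \<in> borel_measurable (M \<Otimes>\<^sub>M M)"
    and s_bdd: "bounded ((\<lambda>(x, y). s x y) ` (space M \<times> space M))"
    and s_nonneg: "\<And>x y. x \<in> space M \<Longrightarrow> y \<in> space M \<Longrightarrow> 0 \<le> s x y"
    and s_sym: "\<And>x y. x \<in> space M \<Longrightarrow> y \<in> space M \<Longrightarrow> s x y = s y x"
    and sol: "qve_solution M a s z u"
  obtains B where "sym_kernel M (\<lambda>x y. cmod (u x) * s x y * cmod (u y)) B"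
proof -
  have [measurable]: "u \<in> borel_measurable M" "(\<lambda>(x, y). s x y) \<in> borel_measurable (M \<Otimes>\<^sub>M M)"
    using sol s_meas by (simp_all add: qve_solution_def)
  obtain Cu where Cu: "\<And>x. x \<in> space M \<Longrightarrow> cmod (u x) \<le> Cu"
    using sol unfolding qve_solution_def bounded_iff by auto
  obtain Cs where Cs: "\<And>x y. x \<in> space M \<Longrightarrow> y \<in> space M \<Longrightarrow> \<bar>s x y\<bar> \<le> Cs"
    using s_bdd unfolding bounded_real by fastforce
  have "sym_kernel M (\<lambda>x y. cmod (u x) * s x y * cmod (u y)) (Cu * Cs * Cu)"
  proof (intro sym_kernel.intro sym_kernel_axioms.intro assms(1))
    show "(\<lambda>(x, y). cmod (u x) * s x y * cmod (u y)) \<in> borel_measurable (M \<Otimes>\<^sub>M M)" by measurable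
    fix x y assume xy: "x \<in> space M" "y \<in> space M"
    have "0 \<le> Cu" using Cu[OF xy(1)] norm_ge_zero order_trans by blast
    show "0 \<le> cmod (u x) * s x y * cmod (u y)" using s_nonneg[OF xy] by simp
    show "cmod (u x) * s x y * cmod (u y) = cmod (u y) * s y x * cmod (u x)" using s_sym[OF xy] by simp
    show "cmod (u x) * s x y * cmod (u y) \<le> Cu * Cs * Cu"
      using Cu xy Cs[OF xy] s_nonneg[OF xy] \<open>0 \<le> Cu\<close> by (intro mult_mono) auto
  qed
  thus ?thesis by (rule that)
qed

lemma qve_solution_Im_identity:
  assumes "finite_measure M" and sol: "qve_solution M a s z u"
    and s_meas: "(\<lambda>(x, y). s x y) \<in> borel_measurable (M \<Otimes>\<^sub>M M)"
    and s_bdd: "bounded ((\<lambda>(x, y). s x y) ` (space M \<times> space M))"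
    and x: "x \<in> space M"
  shows "Im (u x) / cmod (u x)
           = cmod (u x) * Im z + (\<integral>y. cmod (u x) * s x y * cmod (u y) * (Im (u y) / cmod (u y)) \<partial>M)"
proof -
  have [measurable]: "u \<in> borel_measurable M" "(\<lambda>(x, y). s x y) \<in> borel_measurable (M \<Otimes>\<^sub>M M)"
    using sol s_meas by (simp_all add: qve_solution_def)
  obtain Cu where Cu: "\<And>y. y \<in> space M \<Longrightarrow> cmod (u y) \<le> Cu"
    using sol unfolding qve_solution_def bounded_iff by auto
  obtain Cs where Cs: "\<And>y. y \<in> space M \<Longrightarrow> \<bar>s x y\<bar> \<le> Cs"
    using s_bdd x unfolding bounded_real by fastforce
  have "0 \<le> Cs" using Cs[OF x] abs_ge_zero order_trans by blast
  have u_pos: "0 < Im (u y)" if "y \<in> space M" for y using sol that by (simp add: qve_solution_def)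
  have su_int: "integrable M (\<lambda>y. complex_of_real (s x y) * u y)"
    using x Cu Cs \<open>0 \<le> Cs\<close>
    by (intro finite_measure.integrable_const_bound[OF assms(1), where B="Cs * Cu"] AE_I2)
       (auto simp: norm_mult intro: mult_mono)
  have "Im (\<integral>y. complex_of_real (s x y) * u y \<partial>M) = (\<integral>y. s x y * Im (u y) \<partial>M)"
    using integral_Im[OF su_int] by simp
  moreover have "Im (- 1 / u x) = Im (u x) / (cmod (u x))\<^sup>2"
    by (simp add: Im_divide cmod_power2)
  moreover have "- 1 / u x = z + complex_of_real (a x) + (\<integral>y. complex_of_real (s x y) * u y \<partial>M)"
    using sol x by (simp add: qve_solution_def)
  ultimately have Im_eq: "Im (u x) / (cmod (u x))\<^sup>2 = Im z + (\<integral>y. s x y * Im (u y) \<partial>M)"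
    by (metis Im_complex_of_real add.right_neutral plus_complex.sel(2))
  have "cmod (u x) > 0" using u_pos[OF x] by auto
  hence "Im (u x) / cmod (u x) = cmod (u x) * (Im (u x) / (cmod (u x))\<^sup>2)"
    by (simp add: power2_eq_square)
  also have "\<dots> = cmod (u x) * Im z + (\<integral>y. cmod (u x) * (s x y * Im (u y)) \<partial>M)"
    unfolding Im_eq by (simp add: distrib_left)
  also have "(\<integral>y. cmod (u x) * (s x y * Im (u y)) \<partial>M)
      = (\<integral>y. cmod (u x) * s x y * cmod (u y) * (Im (u y) / cmod (u y)) \<partial>M)"
    using u_pos by (intro Bochner_Integration.integral_cong) (auto simp: field_simps)
  finally show ?thesis .
qed

lemma qve_eigenvalue_formula:
  assumes kernel: "sym_kernel M (\<lambda>x y. cmod (u x) * s x y * cmod (u y)) B"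
    and sol: "qve_solution M a s z u"
    and s_meas: "(\<lambda>(x, y). s x y) \<in> borel_measurable (M \<Otimes>\<^sub>M M)"
    and s_bdd: "bounded ((\<lambda>(x, y). s x y) ` (space M \<times> space M))"
    and f: "bounded_measurable M f" "\<And>x. x \<in> space M \<Longrightarrow> 0 \<le> f x" "\<not> (AE x in M. f x = 0)"
    and eigen: "AE x in M. Fop M s u f x = \<mu> * f x"
  shows "\<mu> = 1 - (\<integral>x. f x * cmod (u x) \<partial>M) * Im z / (\<integral>x. f x / cmod (u x) * Im (u x) \<partial>M)"
proof -
  interpret sym_kernel M "\<lambda>x y. cmod (u x) * s x y * cmod (u y)" B by (rule kernel)
  have [measurable]: "u \<in> borel_measurable M" using sol by (simp add: qve_solution_def)
  have u_pos: "0 < Im (u x)" if "x \<in> space M" for x using sol that by (simp add: qve_solution_def)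
  hence cmod_pos: "0 < cmod (u x)" if "x \<in> space M" for x using that by fastforce
  define g where "g x = Im (u x) / cmod (u x)" for x
  define h where "h x = cmod (u x) * Im z" for x
  have g: "bounded_measurable M g"
  proof -
    have "\<bar>g x\<bar> \<le> 1" if "x \<in> space M" for x
      using abs_Im_le_cmod[of "u x"] cmod_pos[OF that] by (simp add: g_def abs_div divide_le_eq_1)
    moreover have "g \<in> borel_measurable M" unfolding g_def by measurable
    ultimately show ?thesis unfolding bounded_measurable_def by blast
  qed
  have "bounded_measurable M (\<lambda>x. cmod (u x))"
    using sol unfolding bounded_measurable_def qve_solution_def bounded_iff by auto
  hence h: "bounded_measurable M h"
    unfolding h_def by (rule bounded_measurable_mult[OF _ bounded_measurable_const])
  have g_eq: "g x = h x + K g x" if "x \<in> space M" for x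
    using qve_solution_Im_identity[OF _ sol s_meas s_bdd that] finite_measure_axioms
    by (simp add: g_def h_def K_def)
  have "0 < (\<integral>x. f x * g x \<partial>M)"
    using f g_def u_pos cmod_pos
    by (intro integral_mult_pos bounded_measurable_integrable bounded_measurable_mult[OF f(1) g]) auto
  hence "\<mu> = 1 - (\<integral>x. f x * h x \<partial>M) / (\<integral>x. f x * g x \<partial>M)"
    using eigen Fop_eq_K[OF kernel] by (intro eigenvalue_eq_one_minus_ratio f(1) g h g_eq) auto
  thus ?thesis by (simp add: g_def h_def ac_simps)
qed

theorem mainTheorem5:
  fixes M :: "'a measure" and a :: "'a \<Rightarrow> real" and s :: "'a \<Rightarrow> 'a \<Rightarrow> real"
    and m :: "complex \<Rightarrow> 'a \<Rightarrow> complex" and z :: complex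
  assumes prob: "prob_space M"
    and a_meas: "a \<in> borel_measurable M" and a_bdd: "bounded (a ` space M)"
    and s_meas: "(\<lambda>(x, y). s x y) \<in> borel_measurable (M \<Otimes>\<^sub>M M)"
    and s_bdd: "bounded ((\<lambda>(x, y). s x y) ` (space M \<times> space M))"
    and s_nonneg: "\<And>x y. x \<in> space M \<Longrightarrow> y \<in> space M \<Longrightarrow> s x y \<ge> 0"
    and s_sym: "\<And>x y. x \<in> space M \<Longrightarrow> y \<in> space M \<Longrightarrow> s x y = s y x"
    and m_sol: "\<And>w. Im w > 0 \<Longrightarrow> qve_solution M a s w (m w)"
    and m_uniq: "\<And>w u. Im w > 0 \<Longrightarrow> qve_solution M a s w u \<Longrightarrow> \<forall>x\<in>space M. u x = m w x"
    and z: "Im z > 0"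
  shows "(\<exists>w. sq_integrable M w \<and> \<not> (AE x in M. w x = 0) \<and>
            (AE x in M. Fop M s (m z) w x = opnorm2 M (Fop M s (m z)) * w x))
       \<and> (\<exists>f. f \<in> borel_measurable M \<and> bounded (f ` space M) \<and> (\<forall>x\<in>space M. f x \<ge> 0) \<and>
            \<not> (AE x in M. f x = 0) \<and>
            (AE x in M. Fop M s (m z) f x = opnorm2 M (Fop M s (m z)) * f x))
       \<and> (\<forall>f. f \<in> borel_measurable M \<and> bounded (f ` space M) \<and> (\<forall>x\<in>space M. f x \<ge> 0) \<and>
            \<not> (AE x in M. f x = 0) \<and>
            (AE x in M. Fop M s (m z) f x = opnorm2 M (Fop M s (m z)) * f x) \<longrightarrow>
            opnorm2 M (Fop M s (m z)) =
              1 - (\<integral>x. f x * cmod (m z x) \<partial>M) * Im z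
                  / (\<integral>x. f x / cmod (m z x) * Im (m z x) \<partial>M))"
proof -
  have sol: "qve_solution M a s z (m z)" by (rule m_sol[OF z])
  obtain B where kernel: "sym_kernel M (\<lambda>x y. cmod (m z x) * s x y * cmod (m z y)) B"
    using qve_solution_sym_kernel[OF prob s_meas s_bdd s_nonneg s_sym sol] .
  interpret sym_kernel M "\<lambda>x y. cmod (m z x) * s x y * cmod (m z y)" B by (rule kernel)
  have F: "Fop M s (m z) = K" by (rule Fop_eq_K[OF kernel])
  obtain f where f: "bounded_measurable M f" "\<And>x. x \<in> space M \<Longrightarrow> 0 \<le> f x"
    "\<not> (AE x in M. f x = 0)" "AE x in M. K f x = norm_K * f x"
    using exists_nonneg_eigenfunction by blast
  show ?thesis
    unfolding F
    using f bounded_measurable_sq_integrable[OF f(1)]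
      qve_eigenvalue_formula[OF kernel sol s_meas s_bdd, unfolded F]
    by (auto simp: bounded_measurable_iff_bounded)
qed

end
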